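(* Consider the draining problem described in the context, with data $x\in\mathbb{R}^2$, $r>0$, $B>A$, $s^\varphi, s^\psi\in\mathbb{R}^2$ and $\check R$. Let $(u^\ast,T^\ast)$ be an optimal solution, with optimal cost $T^\ast$, state trajectory $s^\ast$ and uncertainty trajectory $R^\ast$. Let $t_0\in(0,T^\ast)$ be any time such that $R^\ast(t_0)=0$. Then $$u^\ast(t)=\frac{s^\psi-s^\ast(t_0)}{\|s^\psi-s^\ast(t_0)\|}\quad\text{for all } t\in(t_0,T^\ast).$$
   Context: $\|\cdot\|$ is the Euclidean norm. A single target sits at the fixed position $x\in\mathbb{R}^2$, with sensing range $r>0$ and constants $A,B$ with $B>A$ (uncertainty accumulation rate $A$). The agent has position $s(t)\in\mathbb{R}^2$ with dynamics $\dot s(t)=u(t)$ and control constraint $\|u(t)\|\le 1$. Define the sensing function $p(s)=\max\{0,\,1-\|s-x\|^2/r^2\}$ and the uncertainty dynamics $\dot R=f_R(R,s)$, where $f_R(R,s)=0$ if $R=0$ and $A-Bp(s)<0$, and $f_R(R,s)=A-Bp(s)$ otherwise. The entrance point $s^\varphi$ and the departure point $s^\psi$ are the points where the agent starts, respectively stops, sensing the target. $\check R$ is the uncertainty at arrival. The draining problem is the optimal control problem: minimize $\int_0^T \mathrm{d}t=T$ over $T$ and controls $u:[0,T]\to\mathbb{R}^2$ subject to $\dot s=u$, $\dot R=f_R(R,s)$, $\|u(t)\|^2\le1$, $\min_{\tau\in[0,T]}R(\tau)=0$, $s(0)=s^\varphi$, $s(T)=s^\psi$, $R(0)=\check R$.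 A control law is feasible if it satisfies all these constraints; an optimal trajectory is one generated by a minimizer. *)

theory Defs
  imports "HOL-Analysis.Analysis"
begin

definition sensing :: "real^2 \<Rightarrow> real \<Rightarrow> real^2 \<Rightarrow> real" where
  "sensing x r s = max 0 (1 - (norm (s - x))^2 / r^2)"

definition fR :: "real \<Rightarrow> real \<Rightarrow> real^2 \<Rightarrow> real \<Rightarrow> real \<Rightarrow> real^2 \<Rightarrow> real" where
  "fR A B x r R s =
     (if R = 0 \<and> A - B * sensing x r s < 0 then 0 else A - B * sensing x r s)"

text \<open>Feasibility of (T, u) for the draining problem, together with the generated
  state trajectory s and uncertainty trajectory R (Caratheodory / integral sense).\<close>
definition draining_feasible ::
  "real \<Rightarrow> real \<Rightarrow> real^2 \<Rightarrow> real \<Rightarrow> real^2 \<Rightarrow> real^2 \<Rightarrow> real \<Rightarrow>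
   real \<Rightarrow> (real \<Rightarrow> real^2) \<Rightarrow> (real \<Rightarrow> real^2) \<Rightarrow> (real \<Rightarrow> real) \<Rightarrow> bool" where
  "draining_feasible A B x r sphi spsi Rc T u s R \<longleftrightarrow>
     0 \<le> T \<and>
     u absolutely_integrable_on {0..T} \<and>
     (\<forall>t\<in>{0..T}. (norm (u t))^2 \<le> 1) \<and>
     (\<forall>t\<in>{0..T}. s t = sphi + integral {0..t} u) \<and>
     (\<lambda>t. fR A B x r (R t) (s t)) absolutely_integrable_on {0..T} \<and>
     (\<forall>t\<in>{0..T}. R t = Rc + integral {0..t} (\<lambda>\<tau>. fR A B x r (R \<tau>) (s \<tau>))) \<and>
     (\<forall>t\<in>{0..T}. 0 \<le> R t) \<and> (\<exists>t\<in>{0..T}. R t = 0) \<and>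
     s 0 = sphi \<and> s T = spsi \<and> R 0 = Rc"

definition draining_optimal ::
  "real \<Rightarrow> real \<Rightarrow> real^2 \<Rightarrow> real \<Rightarrow> real^2 \<Rightarrow> real^2 \<Rightarrow> real \<Rightarrow>
   real \<Rightarrow> (real \<Rightarrow> real^2) \<Rightarrow> (real \<Rightarrow> real^2) \<Rightarrow> (real \<Rightarrow> real) \<Rightarrow> bool" where
  "draining_optimal A B x r sphi spsi Rc T u s R \<longleftrightarrow>
     draining_feasible A B x r sphi spsi Rc T u s R \<and>
     (\<forall>T' u' s' R'. draining_feasible A B x r sphi spsi Rc T' u' s' R' \<longrightarrow> T \<le> T')"

end

(* Once the uncertainty vanishes at t0, a competitor may leave s(t0) along the straight
   segment to s^psi at unit speed.  Since the sensing function decreases with the distance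
   to x, the rate A - B p is negative exactly on an interval of that segment, so the
   uncertainty dynamics along it have a nonnegative solution, assembled from a growth phase,
   a decay phase clamped at 0 and a second growth phase.  This competitor is feasible with
   final time t0 + |s^psi - s(t0)|, hence T - t0 <= |s^psi - s(t0)| by optimality.  On the
   other hand |s^psi - s(t0)| = |int_t0^T u| <= T - t0 because |u| <= 1, and equality in
   this estimate forces u to be the unit vector towards s^psi almost everywhere. *)

theory Submission
  imports Defs
begin

lemma has_integral_splice:
  fixes f g :: "real \<Rightarrow> 'a::banach"
  assumes "a \<le> c" "c \<le> t"
    and "(f has_integral I) {a..c}" "(g has_integral J) {c..t}"
  shows "((\<lambda>\<tau>. if \<tau> \<le> c then f \<tau> else g \<tau>) has_integral (I + J)) {a..t}"
proof (rule has_integral_combine[OF assms(1,2)])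
  show "((\<lambda>\<tau>. if \<tau> \<le> c then f \<tau> else g \<tau>) has_integral I) {a..c}"
    by (rule has_integral_eq[OF _ assms(3)]) simp
  show "((\<lambda>\<tau>. if \<tau> \<le> c then f \<tau> else g \<tau>) has_integral J) {c..t}"
    by (rule has_integral_spike_finite[of "{c}" _ _ g]) (use assms(4) in auto)
qed

lemma has_integral_splice_primitives:
  fixes f g :: "real \<Rightarrow> 'a::banach"
  assumes "a \<le> c"
    and F: "\<And>t. t \<in> {a..c} \<Longrightarrow> (f has_integral (F t - z)) {a..t}"
    and G: "\<And>t. t \<in> {c..b} \<Longrightarrow> (g has_integral (G t - G c)) {c..t}"
    and "G c = F c" and t: "t \<in> {a..b}"
  shows "((\<lambda>\<tau>. if \<tau> \<le> c then f \<tau> else g \<tau>) has_integral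
           ((if t \<le> c then F t else G t) - z)) {a..t}"
proof (cases "t \<le> c")
  case True
  then show ?thesis
    using F[of t] t by (auto intro: has_integral_eq)
next
  case False
  then have "((\<lambda>\<tau>. if \<tau> \<le> c then f \<tau> else g \<tau>) has_integral ((F c - z) + (G t - G c))) {a..t}"
    using assms t by (intro has_integral_splice) auto
  then show ?thesis
    using False \<open>G c = F c\<close> by simp
qed

lemma has_integral_Icc_diff:
  fixes f :: "real \<Rightarrow> 'a::banach"
  assumes "(f has_integral I) {a..c}" "(f has_integral J) {a..b}" "a \<le> c" "c \<le> b"
  shows "(f has_integral (J - I)) {c..b}"
proof -
  have "f integrable_on {c..b}"
    using assms(2,3) by (intro integrable_on_subinterval[OF has_integral_integrable]) auto
  moreover have "I + integral {c..b} f = J"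
    using Henstock_Kurzweil_Integration.integral_combine[OF assms(3,4) has_integral_integrable[OF assms(2)]]
      assms(1,2)
    by (simp add: integral_unique)
  ultimately show ?thesis
    by (metis add_diff_cancel_left' integrable_integral)
qed

lemma continuous_on_has_integral_integral:
  fixes h :: "real \<Rightarrow> real"
  assumes "continuous_on {m..n} h" "t \<in> {m..n}"
  shows "(h has_integral integral {m..t} h) {m..t}"
  using assms
  by (intro integrable_integral integrable_continuous_interval continuous_on_subset[OF assms(1)]) auto

lemma has_integral_0_nonneg_imp_AE_0:
  fixes f :: "'a::euclidean_space \<Rightarrow> real"
  assumes f: "(f has_integral 0) S" and S: "S \<in> sets lebesgue"
    and nonneg: "\<And>x. x \<in> S \<Longrightarrow> 0 \<le> f x"
  shows "AE x in lebesgue_on S. f x = 0"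
proof -
  have "f absolutely_integrable_on S"
    using f nonneg by (intro absolutely_integrable_integrable_bound[where g=f]) auto
  then have int: "integrable (lebesgue_on S) f"
    using S by (rule absolutely_integrable_imp_integrable)
  then have "integral\<^sup>L (lebesgue_on S) f = 0"
    using has_integral_integral_lebesgue_on[OF int S] f has_integral_unique by blast
  moreover have "AE x in lebesgue_on S. 0 \<le> f x"
    using S nonneg by (subst AE_restrict_space_iff) auto
  ultimately show ?thesis
    using integral_nonneg_eq_0_iff_AE[OF int] by simp
qed

lemma continuous_on_first_zero:
  fixes G :: "real \<Rightarrow> real"
  assumes cont: "continuous_on {m..n} G" and "0 \<le> G m" "G n \<le> 0" "m \<le> n"
  obtains c where "c \<in> {m..n}" "G c = 0" "\<And>\<sigma>. \<sigma> \<in> {m..<c} \<Longrightarrow> 0 < G \<sigma>"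
proof -
  define Z where "Z = {\<sigma> \<in> {m..n}. G \<sigma> = 0}"
  have zero_before: "\<exists>z\<in>Z. z \<le> \<sigma>" if \<sigma>: "\<sigma> \<in> {m..n}" "G \<sigma> \<le> 0" for \<sigma>
  proof -
    have "continuous_on {m..\<sigma>} G"
      using cont \<sigma>(1) by (auto intro: continuous_on_subset)
    then obtain z where "m \<le> z" "z \<le> \<sigma>" "G z = 0"
      using IVT2'[of G \<sigma> 0 m] \<sigma> \<open>0 \<le> G m\<close> by auto
    then show ?thesis
      using \<sigma>(1) by (auto simp: Z_def)
  qed
  have "Z \<noteq> {}"
    using zero_before[of n] assms by auto
  moreover have "closed Z"
    unfolding Z_def using cont by (intro continuous_closed_preimage_constant) auto
  moreover have bdd: "bdd_below Z"
    by (rule bdd_belowI[of _ m]) (auto simp: Z_def)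
  ultimately have "Inf Z \<in> Z"
    using closed_contains_Inf by blast
  then have c: "Inf Z \<in> {m..n}" "G (Inf Z) = 0"
    by (simp_all add: Z_def)
  have pos: "0 < G \<sigma>" if "\<sigma> \<in> {m..<Inf Z}" for \<sigma>
  proof (rule ccontr)
    assume "\<not> 0 < G \<sigma>"
    moreover have "\<sigma> \<in> {m..n}"
      using that c(1) by auto
    ultimately obtain z where "z \<in> Z" "z \<le> \<sigma>"
      using zero_before[of \<sigma>] by auto
    then have "Inf Z \<le> \<sigma>"
      using cInf_lower[OF _ bdd] by fastforce
    then show False
      using that by simp
  qed
  show ?thesis
    using c pos by (rule that)
qed

lemma convex_subset_Icc_between:
  fixes N :: "real set"
  assumes "convex N" "N \<subseteq> {a..b}" "a \<le> b"
  obtains m1 m2 where "a \<le> m1" "m1 \<le> m2" "m2 \<le> b" "{m1<..<m2} \<subseteq> N" "N \<subseteq> {m1..m2}"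
proof (cases "N = {}")
  case True
  then show ?thesis using that[of a a] assms by auto
next
  case False
  have bdd: "bdd_below N" "bdd_above N"
    using bdd_below_mono[OF bdd_below_Icc assms(2)] bdd_above_mono[OF bdd_above_Icc assms(2)] .
  have "{Inf N<..<Sup N} \<subseteq> N"
  proof
    fix \<tau> assume "\<tau> \<in> {Inf N<..<Sup N}"
    then obtain n1 n2 where "n1 \<in> N" "n1 < \<tau>" "n2 \<in> N" "\<tau> < n2"
      using cInf_less_iff[OF False bdd(1)] less_cSup_iff[OF False bdd(2)] by auto
    then show "\<tau> \<in> N"
      using \<open>convex N\<close> unfolding is_interval_convex_1[symmetric] is_interval_1 by (meson less_imp_le)
  qed
  moreover have "N \<subseteq> {Inf N..Sup N}"
    using bdd by (auto intro: cInf_lower cSup_upper)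
  moreover have "a \<le> Inf N" "Sup N \<le> b"
    using False assms(2) by (meson atLeastAtMost_iff cInf_greatest cSup_least subsetD)+
  moreover have "Inf N \<le> Sup N"
    using False bdd by (simp add: cInf_le_cSup)
  ultimately show ?thesis
    using that by blast
qed

lemma convex_line_vimage:
  fixes y e :: "'a::real_vector"
  assumes "convex S"
  shows "convex {\<tau>::real. y + (\<tau> - c) *\<^sub>R e \<in> S}"
proof (rule convexI)
  fix \<tau>1 \<tau>2 u v :: real
  assume "\<tau>1 \<in> {\<tau>. y + (\<tau> - c) *\<^sub>R e \<in> S}" "\<tau>2 \<in> {\<tau>. y + (\<tau> - c) *\<^sub>R e \<in> S}"
    and "0 \<le> u" "0 \<le> v" "u + v = 1"
  moreover have "y + (u * \<tau>1 + v * \<tau>2 - c) *\<^sub>R e =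
      u *\<^sub>R (y + (\<tau>1 - c) *\<^sub>R e) + v *\<^sub>R (y + (\<tau>2 - c) *\<^sub>R e)"
  proof -
    have v: "v = 1 - u"
      using \<open>u + v = 1\<close> by simp
    show ?thesis
      by (subst v)+ (simp add: algebra_simps)
  qed
  ultimately show "u *\<^sub>R \<tau>1 + v *\<^sub>R \<tau>2 \<in> {\<tau>. y + (\<tau> - c) *\<^sub>R e \<in> S}"
    using convexD[OF assms] by simp
qed

definition reflected_rate :: "real \<Rightarrow> real \<Rightarrow> real" where
  "reflected_rate q a = (if q = 0 \<and> a < 0 then 0 else a)"

definition reflected_solution :: "(real \<Rightarrow> real) \<Rightarrow> real \<Rightarrow> real \<Rightarrow> (real \<Rightarrow> real) \<Rightarrow> bool" where
  "reflected_solution h m n Q \<longleftrightarrow>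
     (\<forall>t\<in>{m..n}. 0 \<le> Q t \<and>
        ((\<lambda>\<tau>. reflected_rate (Q \<tau>) (h \<tau>)) has_integral (Q t - Q m)) {m..t})"

lemma reflected_solution_nonneg: "reflected_solution h m n Q \<Longrightarrow> t \<in> {m..n} \<Longrightarrow> 0 \<le> Q t"
  by (simp add: reflected_solution_def)

lemma reflected_solution_unconstrained:
  assumes "\<And>t. t \<in> {m..n} \<Longrightarrow> (h has_integral (G t - G m)) {m..t}"
    and "\<And>t. t \<in> {m..n} \<Longrightarrow> 0 \<le> G t"
    and "\<And>\<tau>. \<tau> \<in> {m<..<n} \<Longrightarrow> G \<tau> = 0 \<Longrightarrow> 0 \<le> h \<tau>"
  shows "reflected_solution h m n G"
  unfolding reflected_solution_def
proof (intro ballI conjI)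
  fix t assume t: "t \<in> {m..n}"
  show "0 \<le> G t"
    using assms(2)[OF t] .
  show "((\<lambda>\<tau>. reflected_rate (G \<tau>) (h \<tau>)) has_integral (G t - G m)) {m..t}"
  proof (rule has_integral_spike_finite[of "{m, t}" _ _ h])
    show "reflected_rate (G \<tau>) (h \<tau>) = h \<tau>" if "\<tau> \<in> {m..t} - {m, t}" for \<tau>
      using assms(3)[of \<tau>] that t by (auto simp: reflected_rate_def)
  qed (use assms(1)[OF t] in auto)
qed

lemma reflected_solution_at_rest:
  assumes "\<And>\<tau>. \<tau> \<in> {m<..<n} \<Longrightarrow> h \<tau> \<le> 0"
  shows "reflected_solution h m n (\<lambda>_. 0)"
  unfolding reflected_solution_def
proof (intro ballI conjI)
  fix t assume t: "t \<in> {m..n}"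
  show "((\<lambda>\<tau>. reflected_rate 0 (h \<tau>)) has_integral (0 - 0)) {m..t}"
  proof (rule has_integral_spike_finite[of "{m, t}" _ _ "\<lambda>_. 0"])
    show "reflected_rate 0 (h \<tau>) = 0" if "\<tau> \<in> {m..t} - {m, t}" for \<tau>
      using assms[of \<tau>] that t by (auto simp: reflected_rate_def)
  qed auto
qed simp

lemma reflected_solution_splice:
  assumes "m \<le> c" and Q1: "reflected_solution h m c Q1" and Q2: "reflected_solution h c n Q2"
    and "Q2 c = Q1 c"
  shows "reflected_solution h m n (\<lambda>t. if t \<le> c then Q1 t else Q2 t)"
  unfolding reflected_solution_def
proof (intro ballI conjI)
  fix t assume t: "t \<in> {m..n}"
  show "0 \<le> (if t \<le> c then Q1 t else Q2 t)"
    using t reflected_solution_nonneg[OF Q1] reflected_solution_nonneg[OF Q2] by auto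
  have rate: "(\<lambda>\<tau>. reflected_rate (if \<tau> \<le> c then Q1 \<tau> else Q2 \<tau>) (h \<tau>)) =
      (\<lambda>\<tau>. if \<tau> \<le> c then reflected_rate (Q1 \<tau>) (h \<tau>) else reflected_rate (Q2 \<tau>) (h \<tau>))"
    by auto
  have "((\<lambda>\<tau>. if \<tau> \<le> c then reflected_rate (Q1 \<tau>) (h \<tau>) else reflected_rate (Q2 \<tau>) (h \<tau>))
          has_integral ((if t \<le> c then Q1 t else Q2 t) - Q1 m)) {m..t}"
    using Q1 Q2 \<open>m \<le> c\<close> \<open>Q2 c = Q1 c\<close> t
    by (intro has_integral_splice_primitives[where F=Q1 and G=Q2 and z="Q1 m"])
      (auto simp: reflected_solution_def)
  then show "((\<lambda>\<tau>. reflected_rate (if \<tau> \<le> c then Q1 \<tau> else Q2 \<tau>) (h \<tau>)) has_integral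
      ((if t \<le> c then Q1 t else Q2 t) - (if m \<le> c then Q1 m else Q2 m))) {m..t}"
    unfolding rate using \<open>m \<le> c\<close> by simp
qed

lemma reflected_solution_nonneg_rate:
  fixes h :: "real \<Rightarrow> real"
  assumes cont: "continuous_on {m..n} h" and nonneg: "\<And>\<tau>. \<tau> \<in> {m<..<n} \<Longrightarrow> 0 \<le> h \<tau>"
    and "0 \<le> q"
  obtains Q where "reflected_solution h m n Q" "Q m = q"
proof -
  define G where "G t = q + integral {m..t} h" for t
  have "reflected_solution h m n G"
  proof (rule reflected_solution_unconstrained)
    fix t assume t: "t \<in> {m..n}"
    show "(h has_integral (G t - G m)) {m..t}"
      using continuous_on_has_integral_integral[OF cont t] by (simp add: G_def)
    have "(h has_integral integral {m..t} h) {m<..<t}"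
      using continuous_on_has_integral_integral[OF cont t] by (simp add: has_integral_Icc_iff_Ioo)
    then have "0 \<le> integral {m..t} h"
      by (rule has_integral_nonneg) (use nonneg t in auto)
    then show "0 \<le> G t"
      using \<open>0 \<le> q\<close> by (simp add: G_def)
  next
    show "0 \<le> h \<tau>" if "\<tau> \<in> {m<..<n}" for \<tau>
      using nonneg[OF that] .
  qed
  then show ?thesis
    using that by (simp add: G_def)
qed

lemma reflected_solution_nonpos_rate:
  fixes h :: "real \<Rightarrow> real"
  assumes cont: "continuous_on {m..n} h" and nonpos: "\<And>\<tau>. \<tau> \<in> {m<..<n} \<Longrightarrow> h \<tau> \<le> 0"
    and "0 \<le> q" "m \<le> n"
  obtains Q where "reflected_solution h m n Q" "Q m = q"
proof -
  define G where "G t = q + integral {m..t} h" for t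
  have Gm: "G m = q"
    by (simp add: G_def)
  have prim: "(h has_integral (G t - G m)) {m..t}" if "t \<in> {m..n}" for t
    using continuous_on_has_integral_integral[OF cont that] by (simp add: G_def)
  have "continuous_on {m..n} G"
    unfolding G_def using cont
    by (intro continuous_intros indefinite_integral_continuous_1 integrable_continuous_interval)
  show ?thesis
  proof (cases "\<forall>t\<in>{m..n}. 0 < G t")
    case True
    have "reflected_solution h m n G"
    proof (rule reflected_solution_unconstrained)
      show "(h has_integral (G t - G m)) {m..t}" "0 \<le> G t" if "t \<in> {m..n}" for t
        using prim[OF that] True that by (auto simp: less_imp_le)
      show "0 \<le> h \<tau>" if "\<tau> \<in> {m<..<n}" "G \<tau> = 0" for \<tau>
        using True[rule_format, of \<tau>] that by auto
    qed
    then show ?thesis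
      using that Gm by blast
  next
    case False
    then obtain \<tau> where \<tau>: "\<tau> \<in> {m..n}" "G \<tau> \<le> 0"
      by (auto simp: not_less)
    have "continuous_on {m..\<tau>} G"
      using \<open>continuous_on {m..n} G\<close> \<tau>(1) by (auto elim!: continuous_on_subset)
    then obtain c where c: "c \<in> {m..\<tau>}" "G c = 0"
      and before: "\<And>\<sigma>. \<sigma> \<in> {m..<c} \<Longrightarrow> 0 < G \<sigma>"
      by (rule continuous_on_first_zero) (use \<open>0 \<le> q\<close> Gm \<tau> in auto)
    have "reflected_solution h m c G"
    proof (rule reflected_solution_unconstrained)
      show "(h has_integral (G t - G m)) {m..t}" if "t \<in> {m..c}" for t
        using prim that c \<tau> by auto
      show "0 \<le> G t" if "t \<in> {m..c}" for t
        using before[of t] c that by (cases "t = c") auto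
      show "0 \<le> h \<sigma>" if "\<sigma> \<in> {m<..<c}" "G \<sigma> = 0" for \<sigma>
        using before[of \<sigma>] that by auto
    qed
    moreover have "reflected_solution h c n (\<lambda>_. 0)"
      using nonpos c \<tau> by (intro reflected_solution_at_rest) auto
    ultimately have "reflected_solution h m n (\<lambda>t. if t \<le> c then G t else 0)"
      using c by (intro reflected_solution_splice) auto
    then show ?thesis
      using that c Gm by auto
  qed
qed

lemma reflected_solution_exists:
  fixes h :: "real \<Rightarrow> real"
  assumes cont: "continuous_on {a..b} h" and "convex {\<tau> \<in> {a..b}. h \<tau> < 0}"
    and "0 \<le> q" "a \<le> b"
  obtains Q where "reflected_solution h a b Q" "Q a = q"
proof -
  obtain m1 m2 where m: "a \<le> m1" "m1 \<le> m2" "m2 \<le> b"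
    and neg: "{m1<..<m2} \<subseteq> {\<tau> \<in> {a..b}. h \<tau> < 0}"
    and outside: "{\<tau> \<in> {a..b}. h \<tau> < 0} \<subseteq> {m1..m2}"
    using convex_subset_Icc_between[OF assms(2) _ \<open>a \<le> b\<close>] by blast
  have nonneg: "0 \<le> h \<tau>" if "\<tau> \<in> {a<..<m1} \<union> {m2<..<b}" for \<tau>
  proof (rule ccontr)
    assume "\<not> 0 \<le> h \<tau>"
    then have "\<tau> \<in> {m1..m2}"
      using that m by (intro subsetD[OF outside]) auto
    then show False
      using that by auto
  qed
  have cont_sub: "continuous_on {c..d} h" if "a \<le> c" "d \<le> b" for c d
    using that by (intro continuous_on_subset[OF cont]) auto
  obtain Q1 where Q1: "reflected_solution h a m1 Q1" "Q1 a = q"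
    by (rule reflected_solution_nonneg_rate[of a m1 h q]) (use cont_sub m nonneg \<open>0 \<le> q\<close> in auto)
  obtain Q2 where Q2: "reflected_solution h m1 m2 Q2" "Q2 m1 = Q1 m1"
    by (rule reflected_solution_nonpos_rate[of m1 m2 h "Q1 m1"])
      (use cont_sub m neg reflected_solution_nonneg[OF Q1(1)] in \<open>auto simp: subset_iff\<close>)
  define Q12 where "Q12 t = (if t \<le> m1 then Q1 t else Q2 t)" for t
  have Q12: "reflected_solution h a m2 Q12"
    unfolding Q12_def using m Q1 Q2 by (intro reflected_solution_splice) auto
  obtain Q3 where Q3: "reflected_solution h m2 b Q3" "Q3 m2 = Q12 m2"
    by (rule reflected_solution_nonneg_rate[of m2 b h "Q12 m2"])
      (use cont_sub m nonneg reflected_solution_nonneg[OF Q12] in auto)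
  have "reflected_solution h a b (\<lambda>t. if t \<le> m2 then Q12 t else Q3 t)"
    using m Q12 Q3 by (intro reflected_solution_splice) auto
  then show ?thesis
    using that m Q1 by (simp add: Q12_def)
qed

lemma sensing_bounds: "0 \<le> sensing x r y" "sensing x r y \<le> 1"
  unfolding sensing_def by auto

lemma sensing_antimono:
  assumes "norm (y - x) \<le> norm (z - x)"
  shows "sensing x r z \<le> sensing x r y"
proof -
  have "(norm (y - x))\<^sup>2 / r\<^sup>2 \<le> (norm (z - x))\<^sup>2 / r\<^sup>2"
    using assms by (intro divide_right_mono power_mono) auto
  then show ?thesis
    unfolding sensing_def by auto
qed

lemma continuous_on_sensing: "continuous_on S (sensing x r)"
  unfolding sensing_def[abs_def] divide_inverse by (intro continuous_intros)

lemma convex_draining_region: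
  assumes "A < B"
  shows "convex {y. A - B * sensing x r y < 0}"
proof (cases "0 \<le> B")
  case False
  have "A - B * sensing x r y < 0" for y
  proof -
    have "B * 1 \<le> B * sensing x r y"
      using False sensing_bounds(2)[of x r y] by (intro mult_left_mono_neg) auto
    then show ?thesis
      using assms by simp
  qed
  then show ?thesis
    by simp
next
  case True
  show ?thesis
  proof (rule convexI)
    fix y1 y2 :: "real^2" and u v :: real
    assume y: "y1 \<in> {y. A - B * sensing x r y < 0}" "y2 \<in> {y. A - B * sensing x r y < 0}"
      and uv: "0 \<le> u" "0 \<le> v" "u + v = 1"
    define w where "w = (if norm (y2 - x) \<le> norm (y1 - x) then y1 else y2)"
    have "u *\<^sub>R y1 + v *\<^sub>R y2 - x = u *\<^sub>R (y1 - x) + v *\<^sub>R (y2 - x)"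
      using uv(3) by (simp add: algebra_simps flip: scaleR_add_left)
    then have "norm (u *\<^sub>R y1 + v *\<^sub>R y2 - x) = norm (u *\<^sub>R (y1 - x) + v *\<^sub>R (y2 - x))"
      by simp
    also have "\<dots> \<le> u * norm (y1 - x) + v * norm (y2 - x)"
      using uv by (metis abs_of_nonneg norm_scaleR norm_triangle_ineq)
    also have "\<dots> \<le> u * norm (w - x) + v * norm (w - x)"
      using uv by (intro add_mono mult_left_mono) (auto simp: w_def)
    finally have "norm (u *\<^sub>R y1 + v *\<^sub>R y2 - x) \<le> norm (w - x)"
      using uv(3) by (simp flip: distrib_right)
    then have "B * sensing x r w \<le> B * sensing x r (u *\<^sub>R y1 + v *\<^sub>R y2)"
      using True by (intro mult_left_mono sensing_antimono)
    moreover have "A - B * sensing x r w < 0"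
      using y by (simp add: w_def)
    ultimately show "u *\<^sub>R y1 + v *\<^sub>R y2 \<in> {y. A - B * sensing x r y < 0}"
      by simp
  qed
qed

lemma fR_eq_reflected_rate: "fR A B x r q y = reflected_rate q (A - B * sensing x r y)"
  by (simp add: fR_def reflected_rate_def)

lemma abs_fR_le: "\<bar>fR A B x r q y\<bar> \<le> \<bar>A\<bar> + \<bar>B\<bar>"
proof -
  have "\<bar>B * sensing x r y\<bar> \<le> \<bar>B\<bar>"
    using sensing_bounds[of x r y] by (simp add: abs_mult mult_left_le)
  then show ?thesis
    unfolding fR_def by auto
qed

lemma draining_feasible_iff_has_integral:
  "draining_feasible A B x r sphi spsi Rc T u s R \<longleftrightarrow>
     0 \<le> T \<and>
     (\<forall>t\<in>{0..T}. norm (u t) \<le> 1 \<and> 0 \<le> R t \<and>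
        (u has_integral (s t - sphi)) {0..t} \<and>
        ((\<lambda>\<tau>. fR A B x r (R \<tau>) (s \<tau>)) has_integral (R t - Rc)) {0..t}) \<and>
     (\<exists>t\<in>{0..T}. R t = 0) \<and> s T = spsi"
  (is "_ \<longleftrightarrow> ?rhs")
proof
  assume feas: "draining_feasible A B x r sphi spsi Rc T u s R"
  show ?rhs
  proof (intro conjI ballI)
    fix t assume t: "t \<in> {0..T}"
    have "u integrable_on {0..t}"
      using feas t integrable_on_subinterval[of u "{0..T}" 0 t]
      by (auto simp: draining_feasible_def absolutely_integrable_on_def)
    then show "(u has_integral (s t - sphi)) {0..t}"
      using feas t by (simp add: draining_feasible_def integrable_integral)
    have "(\<lambda>\<tau>. fR A B x r (R \<tau>) (s \<tau>)) integrable_on {0..t}"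
      using feas t integrable_on_subinterval[of _ "{0..T}" 0 t]
      by (auto simp: draining_feasible_def absolutely_integrable_on_def)
    then show "((\<lambda>\<tau>. fR A B x r (R \<tau>) (s \<tau>)) has_integral (R t - Rc)) {0..t}"
      using feas t by (simp add: draining_feasible_def integrable_integral)
    show "norm (u t) \<le> 1"
      using feas t by (simp add: draining_feasible_def abs_square_le_1)
    show "0 \<le> R t"
      using feas t unfolding draining_feasible_def by blast
  qed (use feas in \<open>unfold draining_feasible_def, blast+\<close>)
next
  assume rhs: ?rhs
  then have "0 \<le> T" by blast
  have u_int: "(u has_integral (s t - sphi)) {0..t}"
    and f_int: "((\<lambda>\<tau>. fR A B x r (R \<tau>) (s \<tau>)) has_integral (R t - Rc)) {0..t}"
    if "t \<in> {0..T}" for t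
    using rhs that by auto
  have "(u has_integral (s 0 - sphi)) {0}"
    "((\<lambda>\<tau>. fR A B x r (R \<tau>) (s \<tau>)) has_integral (R 0 - Rc)) {0}"
    using u_int[of 0] f_int[of 0] \<open>0 \<le> T\<close> by simp_all
  then have "s 0 = sphi" "R 0 = Rc"
    using has_integral_unique[OF _ has_integral_refl(2)] by force+
  moreover have "u absolutely_integrable_on {0..T}"
    using rhs u_int[of T] \<open>0 \<le> T\<close>
    by (intro absolutely_integrable_integrable_bound[where g="\<lambda>_. 1"]) auto
  moreover have "(\<lambda>\<tau>. fR A B x r (R \<tau>) (s \<tau>)) absolutely_integrable_on {0..T}"
    using f_int[of T] \<open>0 \<le> T\<close> abs_fR_le
    by (intro absolutely_integrable_integrable_bound[where g="\<lambda>_. \<bar>A\<bar> + \<bar>B\<bar>"]) auto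
  moreover have "s t = sphi + integral {0..t} u"
    "R t = Rc + integral {0..t} (\<lambda>\<tau>. fR A B x r (R \<tau>) (s \<tau>))" if "t \<in> {0..T}" for t
    using integral_unique[OF u_int[OF that]] integral_unique[OF f_int[OF that]] by simp_all
  ultimately show "draining_feasible A B x r sphi spsi Rc T u s R"
    using rhs unfolding draining_feasible_def by (simp add: abs_square_le_1)
qed

lemma draining_feasible_straight_to_departure:
  assumes feas: "draining_feasible A B x r sphi spsi Rc T u s R"
    and "A < B" and t0: "t0 \<in> {0..T}" and "R t0 = 0"
  shows "\<exists>u' s' R'. draining_feasible A B x r sphi spsi Rc (t0 + norm (spsi - s t0)) u' s' R'"
proof -
  define d where "d = norm (spsi - s t0)"
  define e where "e = (1 / d) *\<^sub>R (spsi - s t0)"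
    \<comment> \<open>if d = 0 then e = 0, but then the segment has length 0\<close>
  define h where "h \<tau> = A - B * sensing x r (s t0 + (\<tau> - t0) *\<^sub>R e)" for \<tau>
  have "continuous_on {t0..t0 + d} h"
    unfolding h_def by (intro continuous_intros continuous_on_compose2[OF continuous_on_sensing]) auto
  moreover have "convex {\<tau> \<in> {t0..t0 + d}. h \<tau> < 0}"
  proof -
    have "{\<tau> \<in> {t0..t0 + d}. h \<tau> < 0} =
        {t0..t0 + d} \<inter> {\<tau>. s t0 + (\<tau> - t0) *\<^sub>R e \<in> {y. A - B * sensing x r y < 0}}"
      by (auto simp: h_def)
    then show ?thesis
      using \<open>A < B\<close> by (simp only:) (intro convex_Int convex_real_interval convex_line_vimage
          convex_draining_region)
  qed
  ultimately obtain Q where Q: "reflected_solution h t0 (t0 + d) Q" "Q t0 = 0"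
    using reflected_solution_exists[of t0 "t0 + d" h 0] by (auto simp: d_def)
  define u' where "u' = (\<lambda>\<tau>. if \<tau> \<le> t0 then u \<tau> else e)"
  define s' where "s' = (\<lambda>\<tau>. if \<tau> \<le> t0 then s \<tau> else s t0 + (\<tau> - t0) *\<^sub>R e)"
  define R' where "R' = (\<lambda>\<tau>. if \<tau> \<le> t0 then R \<tau> else Q \<tau>)"
  have old: "norm (u t) \<le> 1" "0 \<le> R t" "(u has_integral (s t - sphi)) {0..t}"
    "((\<lambda>\<tau>. fR A B x r (R \<tau>) (s \<tau>)) has_integral (R t - Rc)) {0..t}" if "t \<in> {0..T}" for t
    using feas that unfolding draining_feasible_iff_has_integral by auto
  have "norm e \<le> 1"
    by (simp add: e_def d_def)
  have line: "((\<lambda>_. e) has_integral ((t - t0) *\<^sub>R e)) {t0..t}" if "t0 \<le> t" for t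
    using has_integral_const_real[of e t0 t] that by simp
  have rate: "(\<lambda>\<tau>. fR A B x r (R' \<tau>) (s' \<tau>)) =
      (\<lambda>\<tau>. if \<tau> \<le> t0 then fR A B x r (R \<tau>) (s \<tau>) else reflected_rate (Q \<tau>) (h \<tau>))"
    by (auto simp: R'_def s'_def h_def fR_eq_reflected_rate)
  have "draining_feasible A B x r sphi spsi Rc (t0 + d) u' s' R'"
    unfolding draining_feasible_iff_has_integral
  proof (intro conjI ballI)
    fix t assume t: "t \<in> {0..t0 + d}"
    show "norm (u' t) \<le> 1" "0 \<le> R' t"
      using old t0 t \<open>norm e \<le> 1\<close> reflected_solution_nonneg[OF Q(1)] by (auto simp: u'_def R'_def)
    show "(u' has_integral (s' t - sphi)) {0..t}"
      unfolding u'_def s'_def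
      by (rule has_integral_splice_primitives[where G="\<lambda>\<tau>. s t0 + (\<tau> - t0) *\<^sub>R e" and b="t0 + d"])
        (use t0 old t line in auto)
    show "((\<lambda>\<tau>. fR A B x r (R' \<tau>) (s' \<tau>)) has_integral (R' t - Rc)) {0..t}"
      unfolding rate unfolding R'_def
      by (rule has_integral_splice_primitives[where G=Q and b="t0 + d"])
        (use t0 old t Q \<open>R t0 = 0\<close> in \<open>auto simp: reflected_solution_def\<close>)
  next
    show "s' (t0 + d) = spsi"
      by (cases "d = 0") (auto simp: s'_def e_def d_def)
  qed (use t0 \<open>R t0 = 0\<close> in \<open>auto simp: R'_def d_def intro!: bexI[of _ t0]\<close>)
  then show ?thesis
    unfolding d_def by blast
qed

lemma inner_eq_1_imp_eq_unit:
  fixes a e :: "'a::real_inner"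
  assumes "norm a \<le> 1" "norm e = 1" "e \<bullet> a = 1"
  shows "a = e"
proof -
  have "(norm (a - e))\<^sup>2 = (norm a)\<^sup>2 - 2 * (e \<bullet> a) + (norm e)\<^sup>2"
    by (simp add: power2_norm_eq_inner inner_diff_left inner_diff_right inner_commute)
  also have "\<dots> \<le> 0"
    using assms by (simp add: power_le_one)
  finally show ?thesis
    by simp
qed

lemma AE_eq_sgn_if_length_le_norm_integral:
  fixes u :: "real \<Rightarrow> 'a::euclidean_space"
  assumes u: "(u has_integral v) {a..b}" and bounded: "\<And>t. t \<in> {a..b} \<Longrightarrow> norm (u t) \<le> 1"
    and "b - a \<le> norm v"
  shows "AE t in lebesgue_on {a<..<b}. u t = sgn v"
proof (cases "a < b")
  case False
  then show ?thesis
    by (simp add: AE_restrict_space_iff)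
next
  case True
  then have "norm (sgn v) = 1"
    using \<open>b - a \<le> norm v\<close> by (auto simp: norm_sgn)
  define g where "g t = 1 - sgn v \<bullet> u t" for t
  have g_nonneg: "0 \<le> g t" if "t \<in> {a..b}" for t
    using norm_cauchy_schwarz[of "sgn v" "u t"] bounded[OF that] \<open>norm (sgn v) = 1\<close>
    by (simp add: g_def)
  have "((\<lambda>t. sgn v \<bullet> u t) has_integral sgn v \<bullet> v) {a..b}"
    using has_integral_linear[OF u bounded_linear_inner_right] by (simp add: o_def)
  moreover have "((\<lambda>t. 1) has_integral (b - a)) {a..b}"
    using has_integral_const_real[of "1::real" a b] True by simp
  ultimately have "(g has_integral ((b - a) - sgn v \<bullet> v)) {a..b}"
    unfolding g_def by (rule has_integral_diff[rotated])
  moreover have "sgn v \<bullet> v = norm v"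
    by (cases "v = 0")
      (simp_all add: sgn_div_norm power2_norm_eq_inner[symmetric] power2_eq_square divide_inverse)
  ultimately have g_int: "(g has_integral ((b - a) - norm v)) {a..b}"
    by simp
  then have "(g has_integral 0) {a..b}"
    using has_integral_nonneg[OF g_int g_nonneg] \<open>b - a \<le> norm v\<close> by simp
  then have "(g has_integral 0) {a<..<b}"
    by (simp add: has_integral_Icc_iff_Ioo)
  then have "AE t in lebesgue_on {a<..<b}. g t = 0"
    by (rule has_integral_0_nonneg_imp_AE_0) (auto intro: g_nonneg)
  moreover have "AE t in lebesgue_on {a<..<b}. t \<in> {a<..<b}"
    by (subst AE_restrict_space_iff) (auto intro: AE_I2)
  ultimately show ?thesis
  proof eventually_elim
    case (elim t)
    show "u t = sgn v"
    proof (rule inner_eq_1_imp_eq_unit)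
      show "norm (u t) \<le> 1"
        using elim bounded[of t] by simp
      show "sgn v \<bullet> u t = 1"
        using elim by (simp add: g_def)
    qed fact
  qed
qed

theorem lemma1:
  fixes A B r Rc T t0 :: real and x sphi spsi :: "real^2"
    and u s :: "real \<Rightarrow> real^2" and R :: "real \<Rightarrow> real"
  assumes "r > 0" and "B > A"
    and "draining_optimal A B x r sphi spsi Rc T u s R"
    and "t0 \<in> {0<..<T}" and "R t0 = 0"
  shows "AE t in lebesgue_on {t0<..<T}.
           u t = (1 / norm (spsi - s t0)) *\<^sub>R (spsi - s t0)"
proof -
  have feas: "draining_feasible A B x r sphi spsi Rc T u s R"
    and minimal: "\<And>T' u' s' R'. draining_feasible A B x r sphi spsi Rc T' u' s' R' \<Longrightarrow> T \<le> T'"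
    using assms(3) unfolding draining_optimal_def by auto
  have t0: "t0 \<in> {0..T}"
    using assms(4) by auto
  have u: "(u has_integral (s t - sphi)) {0..t}" "norm (u t) \<le> 1" if "t \<in> {0..T}" for t
    using feas that unfolding draining_feasible_iff_has_integral by auto
  have "s T = spsi"
    using feas unfolding draining_feasible_iff_has_integral by blast
  then have "(u has_integral (spsi - s t0)) {t0..T}"
    using has_integral_Icc_diff[OF u(1) u(1), of t0 T] t0 by simp
  moreover have "T - t0 \<le> norm (spsi - s t0)"
    using draining_feasible_straight_to_departure[OF feas \<open>B > A\<close> t0 \<open>R t0 = 0\<close>] minimal by force
  ultimately have "AE t in lebesgue_on {t0<..<T}. u t = sgn (spsi - s t0)"
    using t0 u(2) by (intro AE_eq_sgn_if_length_le_norm_integral) auto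
  then show ?thesis
    by (simp add: sgn_div_norm divide_inverse)
qed

end
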